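(* Let $a,w\in \mathcal{A}$. Then the following are equivalent: (1) $a$ has a $w$-weighted generalized core-EP inverse. (2) There exist $z,y\in \mathcal{A}$ such that $a=z+y$, $(wz)^*(wy)=ywz=0$, $z$ has a $w$-weighted core inverse, and $y\in \mathcal{A}_w^{qnil}$. (3) There exist $z,y\in \mathcal{A}$ such that $a=z+y$, $ywz=0$, $z$ has a $w$-weighted core inverse, and $y\in \mathcal{A}_w^{qnil}$. In this case, $a^{\mathrm{gcEP},w}=z^{\mathrm{core},w}$.
   Context: $\mathcal{A}$ is a complex Banach *-algebra with identity. An element $a$ has a $w$-weighted core inverse if there is $x\in\mathcal{A}$ with $a(wx)^2=x$, $(wawx)^*=wawx$, $xw(aw)^2=aw$; such $x$ is unique and denoted $a^{\mathrm{core},w}$. An element $a$ has a $w$-weighted generalized core-EP inverse if there is $x\in\mathcal{A}$ with $a(wx)^2=x$, $(wawx)^*=wawx$, $\lim_{n\to\infty}\|(aw)^n-(xw)(aw)^{n+1}\|^{1/n}=0$; such $x$ is unique and denoted $a^{\mathrm{gcEP},w}$. $\mathcal{A}_w^{qnil}=\{y\in\mathcal{A}: \lim_{n\to\infty}\|(yw)^n\|^{1/n}=0\}$. *)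

theory Defs
  imports "HOL-Analysis.Analysis"
begin

class cbanach_star_algebra_1 = banach + real_normed_algebra_1 +
  fixes scaleC :: "complex \<Rightarrow> 'a \<Rightarrow> 'a"
    and invol :: "'a \<Rightarrow> 'a"
  assumes scaleC_of_real: "scaleC (complex_of_real r) x = scaleR r x"
    and scaleC_add_left: "scaleC (c + d) x = scaleC c x + scaleC d x"
    and scaleC_add_right: "scaleC c (x + y) = scaleC c x + scaleC c y"
    and scaleC_scaleC: "scaleC c (scaleC d x) = scaleC (c * d) x"
    and scaleC_one: "scaleC 1 x = x"
    and norm_scaleC: "norm (scaleC c x) = cmod c * norm x"
    and scaleC_mult_left: "scaleC c x * y = scaleC c (x * y)"
    and scaleC_mult_right: "x * scaleC c y = scaleC c (x * y)"
    and invol_invol: "invol (invol x) = x"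
    and invol_add: "invol (x + y) = invol x + invol y"
    and invol_mult: "invol (x * y) = invol y * invol x"
    and invol_scaleC: "invol (scaleC c x) = scaleC (cnj c) (invol x)"

definition is_wcore_inv :: "'a::cbanach_star_algebra_1 \<Rightarrow> 'a \<Rightarrow> 'a \<Rightarrow> bool" where
  "is_wcore_inv a w x \<longleftrightarrow>
     a * (w * x)^2 = x \<and> invol (w * a * w * x) = w * a * w * x \<and> x * w * (a * w)^2 = a * w"

definition has_wcore_inv :: "'a::cbanach_star_algebra_1 \<Rightarrow> 'a \<Rightarrow> bool" where
  "has_wcore_inv a w \<longleftrightarrow> (\<exists>x. is_wcore_inv a w x)"

definition wcore_inv :: "'a::cbanach_star_algebra_1 \<Rightarrow> 'a \<Rightarrow> 'a" where
  "wcore_inv a w = (THE x. is_wcore_inv a w x)"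

definition is_wgcEP_inv :: "'a::cbanach_star_algebra_1 \<Rightarrow> 'a \<Rightarrow> 'a \<Rightarrow> bool" where
  "is_wgcEP_inv a w x \<longleftrightarrow>
     a * (w * x)^2 = x \<and> invol (w * a * w * x) = w * a * w * x \<and>
     (\<lambda>n. norm ((a * w)^n - (x * w) * (a * w)^(n + 1)) powr (1 / real n)) \<longlonglongrightarrow> 0"

definition has_wgcEP_inv :: "'a::cbanach_star_algebra_1 \<Rightarrow> 'a \<Rightarrow> bool" where
  "has_wgcEP_inv a w \<longleftrightarrow> (\<exists>x. is_wgcEP_inv a w x)"

definition wgcEP_inv :: "'a::cbanach_star_algebra_1 \<Rightarrow> 'a \<Rightarrow> 'a" where
  "wgcEP_inv a w = (THE x. is_wgcEP_inv a w x)"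

definition w_qnil :: "'a::cbanach_star_algebra_1 \<Rightarrow> 'a set" where
  "w_qnil w = {y. (\<lambda>n. norm ((y * w)^n) powr (1 / real n)) \<longlonglongrightarrow> 0}"

end

theory Submission
  imports Defs
begin

text \<open>Write \<open>b = a w\<close> and \<open>X = x w\<close>. The analytic condition on a generalized core-EP
  inverse \<open>x\<close> says that the residuals \<open>b^n - X b^(n+1)\<close> decay faster than any geometric
  sequence, so by the root test \<open>(b^n - X b^(n+1)) c^n \<longrightarrow> 0\<close> for every \<open>c\<close>. Taking for \<open>c\<close>
  the element \<open>X' = x' w\<close> of a second inverse, for which \<open>b X' X' = X'\<close>, the sequence is constant,
  whence \<open>b X' = X b b X'\<close>; uniqueness then follows because \<open>w b x\<close> and \<open>w b x'\<close> are
  selfadjoint and absorb each other.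

  The decomposition is \<open>z = b X a\<close>, \<open>y = a - z\<close>: then \<open>x\<close> is the core inverse of \<open>z\<close>, and
  \<open>y w = (1 - b X) b\<close> has powers \<open>(1 - b X)(b^n - X b^(n+1))\<close>, so \<open>y\<close> is quasinilpotent.
  Conversely, if \<open>y w z = 0\<close> and \<open>x\<close> is the core inverse of \<open>z\<close>, the residuals of \<open>(z + y) w\<close>
  with respect to \<open>x w\<close> are \<open>(1 - x w z w - x w y w)(y w)^n\<close>.\<close>

definition root_null :: "(nat \<Rightarrow> 'a::real_normed_vector) \<Rightarrow> bool" where
  "root_null u \<longleftrightarrow> (\<lambda>n. norm (u n) powr (1 / real n)) \<longlonglongrightarrow> 0"

lemma root_null_iff_root: "root_null u \<longleftrightarrow> (\<lambda>n. root n (norm (u n))) \<longlonglongrightarrow> 0"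
proof -
  have "\<forall>\<^sub>F n in sequentially. norm (u n) powr (1 / real n) = root n (norm (u n))"
    using eventually_gt_at_top[of 0] by eventually_elim (simp add: root_powr_inverse)
  then show ?thesis
    unfolding root_null_def by (rule tendsto_cong)
qed

lemma root_null_eventually_cong:
  assumes "\<forall>\<^sub>F n in sequentially. u n = v n"
  shows "root_null u \<longleftrightarrow> root_null v"
  unfolding root_null_def using assms by (intro tendsto_cong) (auto elim: eventually_mono)

lemma root_null_mult_left:
  fixes u :: "nat \<Rightarrow> 'a::real_normed_algebra"
  assumes "root_null u"
  shows "root_null (\<lambda>n. c * u n)"
  unfolding root_null_iff_root
proof (rule Lim_null_comparison)
  have u: "(\<lambda>n. root n (norm (u n))) \<longlonglongrightarrow> 0"
    using assms by (simp add: root_null_iff_root)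
  show "(\<lambda>n. root n (norm c) * root n (norm (u n))) \<longlonglongrightarrow> 0"
  proof (cases "c = 0")
    case False
    then show ?thesis
      using tendsto_mult[OF LIMSEQ_root_const u, of "norm c"] by simp
  qed simp
  show "\<forall>\<^sub>F n in sequentially.
      norm (root n (norm (c * u n))) \<le> root n (norm c) * root n (norm (u n))"
    using eventually_gt_at_top[of 0]
    by eventually_elim (simp add: real_root_ge_zero norm_mult_ineq flip: real_root_mult)
qed

lemma root_null_mult_power_tendsto_zero:
  fixes u :: "nat \<Rightarrow> 'a::real_normed_algebra_1"
  assumes "root_null u"
  shows "(\<lambda>n. u n * c ^ n) \<longlonglongrightarrow> 0"
proof (rule Lim_null_comparison)
  have "(\<lambda>n. root n (norm (u n)) * norm c) \<longlonglongrightarrow> 0"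
    using tendsto_mult_left_zero assms by (auto simp: root_null_iff_root)
  moreover have "\<forall>\<^sub>F n in sequentially.
      root n (norm (u n)) * norm c = root n (norm (norm (u n) * norm c ^ n))"
    using eventually_gt_at_top[of 0] by eventually_elim (simp add: real_root_mult real_root_power)
  ultimately have "(\<lambda>n. root n (norm (norm (u n) * norm c ^ n))) \<longlonglongrightarrow> 0"
    by (rule Lim_transform_eventually)
  then have "summable (\<lambda>n. norm (u n) * norm c ^ n)"
    by (rule root_test_convergence) simp
  then show "(\<lambda>n. norm (u n) * norm c ^ n) \<longlonglongrightarrow> 0"
    by (rule summable_LIMSEQ_zero)
  show "\<forall>\<^sub>F n in sequentially. norm (u n * c ^ n) \<le> norm (u n) * norm c ^ n"
    by (intro always_eventually allI order.trans[OF norm_mult_ineq] mult_left_mono norm_power_ineq)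
      simp
qed

definition power_residual :: "'a::ring_1 \<Rightarrow> 'a \<Rightarrow> nat \<Rightarrow> 'a" where
  "power_residual b x n = b ^ n - x * b ^ (n + 1)"

lemma power_mult_power_Suc:
  fixes b x :: "'a::monoid_mult"
  assumes "b * x * x = x"
  shows "b ^ n * x ^ Suc n = x"
proof (induction n)
  case (Suc n)
  have "b ^ Suc n * x ^ Suc (Suc n) = b ^ n * (b * x * x) * x ^ n"
    by (simp only: power_Suc2[of b] power_Suc[of x] mult.assoc)
  also have "\<dots> = b ^ n * x ^ Suc n"
    by (simp only: assms) (simp add: mult.assoc)
  finally show ?case
    using Suc.IH by simp
qed simp

lemma power_residual_mult_power:
  fixes b c x :: "'a::ring_1"
  assumes "b * x * x = x"
  shows "power_residual b c (Suc n) * x ^ Suc n = b * x - c * b * b * x"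
proof -
  have "power_residual b c (Suc n) * x ^ Suc n
      = b * (b ^ n * x ^ Suc n) - c * b * b * (b ^ n * x ^ Suc n)"
    by (simp add: power_residual_def algebra_simps)
  then show ?thesis
    by (simp only: power_mult_power_Suc[OF assms])
qed

lemma power_residual_add_annihilated:
  fixes b n x :: "'a::ring_1"
  assumes nb: "n * b = 0" and xbb: "x * b * b = b"
  shows "power_residual (b + n) x k = (1 - x * b - x * n) * n ^ k"
proof (induction k)
  case 0
  then show ?case
    by (simp add: power_residual_def algebra_simps)
next
  case (Suc k)
  have rb: "(1 - x * b - x * n) * b = 0"
    using nb xbb by (simp add: algebra_simps mult.assoc)
  have "power_residual (b + n) x (Suc k) = power_residual (b + n) x k * (b + n)"
    by (simp add: power_residual_def power_Suc2 algebra_simps del: power_Suc)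
  also have "\<dots> = (1 - x * b - x * n) * n ^ k * b + (1 - x * b - x * n) * n ^ Suc k"
    by (simp add: Suc.IH power_Suc2 distrib_left mult.assoc del: power_Suc)
  also have "(1 - x * b - x * n) * n ^ k * b = 0"
    using rb nb by (cases k) (simp_all add: power_Suc2 mult.assoc del: power_Suc)
  finally show ?case
    by simp
qed

lemma power_mult_complement:
  fixes b x :: "'a::ring_1"
  assumes bxx: "b * x * x = x" and bx: "b * x = x * b * b * x"
  shows "((1 - b * x) * b) ^ Suc n = (1 - b * x) * power_residual b x (Suc n)"
proof -
  define q where "q = 1 - b * x"
  have "b * x * b * b * x = b * b * x"
    by (metis bx mult.assoc)
  then have qbq: "q * b * q = q * b"
    by (simp add: q_def algebra_simps)
  have "(q * b) ^ Suc k = q * b ^ Suc k" for k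
  proof (induction k)
    case (Suc k)
    have "(q * b) ^ Suc (Suc k) = (q * b * q) * b ^ Suc k"
      by (simp only: power_Suc[of "q * b" "Suc k"] Suc.IH mult.assoc)
    also have "\<dots> = q * b ^ Suc (Suc k)"
      by (simp only: qbq) (simp add: mult.assoc)
    finally show ?case .
  qed simp
  moreover have "q * (1 - x * b) = q"
    by (simp add: q_def algebra_simps bxx flip: mult.assoc)
  moreover have "q * power_residual b x (Suc n) = q * (1 - x * b) * b ^ Suc n"
    by (simp add: power_residual_def algebra_simps)
  ultimately show ?thesis
    by (simp add: q_def)
qed

lemma selfadjoint_eq_if_absorbing:
  fixes p q :: "'a::cbanach_star_algebra_1"
  assumes "invol p = p" "invol q = q" "p * q = q" "q * p = p"
  shows "p = q"
  by (metis assms invol_mult)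

lemma is_wgcEP_inv_iff:
  "is_wgcEP_inv a w x \<longleftrightarrow>
     a * w * (x * w) * x = x \<and> invol (w * a * w * x) = w * a * w * x \<and>
     root_null (power_residual (a * w) (x * w))"
  by (simp add: is_wgcEP_inv_def root_null_def power_residual_def power2_eq_square mult.assoc)

lemma is_wcore_inv_iff:
  "is_wcore_inv z w x \<longleftrightarrow>
     z * w * (x * w) * x = x \<and> invol (w * z * w * x) = w * z * w * x \<and>
     x * w * (z * w) * (z * w) = z * w"
  by (simp add: is_wcore_inv_def power2_eq_square mult.assoc)

lemma w_qnil_iff: "y \<in> w_qnil w \<longleftrightarrow> root_null (\<lambda>n. (y * w) ^ n)"
  by (simp add: w_qnil_def root_null_def)

lemma is_wgcEP_inv_absorb:
  assumes x1: "is_wgcEP_inv a w x1" and x2: "is_wgcEP_inv a w x2"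
  shows "a * w * (x2 * w) = x1 * w * (a * w) * (a * w) * (x2 * w)"
proof -
  define b X1 X2 where "b = a * w" and "X1 = x1 * w" and "X2 = x2 * w"
  have "b * X2 * x2 = x2"
    using x2 by (simp add: is_wgcEP_inv_iff b_def X2_def)
  then have bXX: "b * X2 * X2 = X2"
    by (simp add: X2_def flip: mult.assoc)
  have "(\<lambda>n. power_residual b X1 n * X2 ^ n) \<longlonglongrightarrow> 0"
    using x1 by (intro root_null_mult_power_tendsto_zero) (simp add: is_wgcEP_inv_iff b_def X1_def)
  moreover have "\<forall>\<^sub>F n in sequentially.
      power_residual b X1 n * X2 ^ n = b * X2 - X1 * b * b * X2"
    using eventually_gt_at_top[of 0]
  proof eventually_elim
    case (elim n)
    then obtain m where "n = Suc m"
      using gr0_conv_Suc by blast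
    then show ?case
      using power_residual_mult_power[OF bXX] by blast
  qed
  ultimately have "(\<lambda>n. b * X2 - X1 * b * b * X2) \<longlonglongrightarrow> 0"
    by (rule Lim_transform_eventually)
  then show ?thesis
    by (simp add: b_def X1_def X2_def LIMSEQ_const_iff)
qed

lemma is_wgcEP_inv_cross:
  assumes x1: "is_wgcEP_inv a w x1" and x2: "is_wgcEP_inv a w x2"
  shows "x1 * w * (a * w) * x2 = x2"
proof -
  have x2x2: "a * w * (x2 * w) * x2 = x2"
    using x2 by (simp add: is_wgcEP_inv_iff)
  have "x1 * w * (a * w) * x2 = (x1 * w * (a * w) * (a * w) * (x2 * w)) * x2"
    by (subst (1) x2x2[symmetric]) (simp add: mult.assoc)
  also have "\<dots> = x2"
    by (simp add: x2x2 flip: is_wgcEP_inv_absorb[OF x1 x2])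
  finally show ?thesis .
qed

lemma is_wgcEP_inv_unique:
  assumes x1: "is_wgcEP_inv a w x1" and x2: "is_wgcEP_inv a w x2"
  shows "x1 = x2"
proof -
  have absorb: "w * a * w * xi * (w * a * w * xj) = w * a * w * xj"
    if "is_wgcEP_inv a w xi" "is_wgcEP_inv a w xj" for xi xj
    using is_wgcEP_inv_cross[OF that] by (simp add: mult.assoc)
  have "invol (w * a * w * x1) = w * a * w * x1" "invol (w * a * w * x2) = w * a * w * x2"
    using x1 x2 by (simp_all add: is_wgcEP_inv_iff)
  then have p: "w * a * w * x1 = w * a * w * x2"
    using selfadjoint_eq_if_absorbing absorb[OF x1 x2] absorb[OF x2 x1] by blast
  have "x1 = x1 * (w * a * w * x1)"
    using is_wgcEP_inv_cross[OF x1 x1] by (simp add: mult.assoc)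
  also have "\<dots> = x1 * (w * a * w * x2)"
    by (simp only: p)
  also have "\<dots> = x2"
    using is_wgcEP_inv_cross[OF x1 x2] by (simp add: mult.assoc)
  finally show ?thesis .
qed

lemma wgcEP_inv_eqI: "is_wgcEP_inv a w x \<Longrightarrow> wgcEP_inv a w = x"
  unfolding wgcEP_inv_def using is_wgcEP_inv_unique by blast

lemma is_wgcEP_inv_add_w_qnil:
  assumes yz: "y * w * z = 0" and core: "is_wcore_inv z w x" and y: "y \<in> w_qnil w"
  shows "is_wgcEP_inv (z + y) w x"
proof -
  have zx: "z * w * (x * w) * x = x" and sym: "invol (w * z * w * x) = w * z * w * x"
    and zz: "x * w * (z * w) * (z * w) = z * w"
    using core by (simp_all add: is_wcore_inv_iff)
  have "y * w * x = (y * w * z) * w * (x * w) * x"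
    by (subst (1) zx[symmetric]) (simp add: mult.assoc)
  then have yx: "y * w * x = 0"
    by (simp add: yz)
  have "(z + y) * w * (x * w) * x = x"
    using zx yx by (simp add: algebra_simps flip: mult.assoc)
  moreover have "w * (z + y) * w * x = w * z * w * x"
    using yx by (simp add: distrib_left distrib_right mult.assoc)
  moreover have "y * w * (z * w) = 0"
    using yz by (simp flip: mult.assoc)
  then have "power_residual ((z + y) * w) (x * w) =
      (\<lambda>k. (1 - x * w * (z * w) - x * w * (y * w)) * (y * w) ^ k)"
    using power_residual_add_annihilated[OF _ zz] by (simp add: distrib_right fun_eq_iff)
  moreover have "root_null \<dots>"
    using y by (intro root_null_mult_left) (simp add: w_qnil_iff)
  ultimately show ?thesis
    using sym by (simp add: is_wgcEP_inv_iff)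
qed

lemma zero_in_w_qnil: "0 \<in> w_qnil w"
proof -
  have "\<forall>\<^sub>F n in sequentially. (0::'a) = (0 * w) ^ n"
    using eventually_gt_at_top[of 0] by eventually_elim (simp add: zero_power)
  then show ?thesis
    unfolding w_qnil_iff by (subst root_null_eventually_cong) (auto simp: root_null_def)
qed

lemma is_wcore_inv_unique:
  assumes "is_wcore_inv z w x1" "is_wcore_inv z w x2"
  shows "x1 = x2"
  using is_wgcEP_inv_add_w_qnil[OF _ _ zero_in_w_qnil, of w z] assms
  by (metis add.right_neutral is_wgcEP_inv_unique mult_zero_left)

lemma wcore_inv_eqI: "is_wcore_inv z w x \<Longrightarrow> wcore_inv z w = x"
  unfolding wcore_inv_def using is_wcore_inv_unique by blast

lemma is_wgcEP_inv_identities: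
  assumes x: "is_wgcEP_inv a w x"
  shows "a * w * (x * w) * x = x"
    and "x * w * (a * w) * x = x"
    and "a * w * (x * w) = x * w * (a * w) * (a * w) * (x * w)"
    and "a * w * (x * w) * (x * w) = x * w"
    and "x * w * (a * w) * (x * w) = x * w"
proof -
  show bXx: "a * w * (x * w) * x = x"
    using x by (simp add: is_wgcEP_inv_iff)
  show "x * w * (a * w) * x = x"
    using is_wgcEP_inv_cross[OF x x] .
  show bX: "a * w * (x * w) = x * w * (a * w) * (a * w) * (x * w)"
    using is_wgcEP_inv_absorb[OF x x] .
  show bXX: "a * w * (x * w) * (x * w) = x * w"
    by (metis bXx mult.assoc)
  have "x * w * (a * w) * (x * w) = (x * w * (a * w) * (a * w) * (x * w)) * (x * w)"
    by (subst (1) bXX[symmetric]) (simp add: mult.assoc)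
  also have "\<dots> = x * w"
    by (simp only: bXX flip: bX)
  finally show "x * w * (a * w) * (x * w) = x * w" .
qed

lemma is_wcore_inv_wgcEP_core_part:
  assumes x: "is_wgcEP_inv a w x"
  shows "is_wcore_inv (a * w * (x * w) * a) w x"
proof -
  define b X where "b = a * w" and "X = x * w"
  note ids = is_wgcEP_inv_identities[OF x, folded b_def X_def]
  have "a * w * (x * w) * a * w * (x * w) * x = b * X * (b * X * x)"
    by (simp add: b_def X_def mult.assoc)
  moreover have "w * (a * w * (x * w) * a) * w * x = w * a * w * x"
    using ids(2) by (simp add: b_def X_def mult.assoc)
  moreover have "x * w * (a * w * (x * w) * a * w) * (a * w * (x * w) * a * w)
      = (X * b * X) * b * b * X * b"
    by (simp add: b_def X_def mult.assoc)
  moreover have "(X * b * X) * b * b * X * b = b * X * b"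
    by (metis ids(3,5) mult.assoc)
  ultimately show ?thesis
    using x ids(1) by (simp add: is_wcore_inv_iff is_wgcEP_inv_iff b_def X_def mult.assoc)
qed

lemma wgcEP_nil_part_mult_core_part:
  assumes x: "is_wgcEP_inv a w x"
  shows "(a - a * w * (x * w) * a) * w * (a * w * (x * w) * a) = 0"
proof -
  define b X where "b = a * w" and "X = x * w"
  note ids = is_wgcEP_inv_identities[OF x, folded b_def X_def]
  have "(a - a * w * (x * w) * a) * w * (a * w * (x * w) * a)
      = b * (b * X) * a - b * (X * b * b * X) * a"
    by (simp add: b_def X_def algebra_simps)
  then show ?thesis
    by (simp flip: ids(3))
qed

lemma wgcEP_core_part_orthogonal:
  assumes x: "is_wgcEP_inv a w x"
  shows "invol (w * (a * w * (x * w) * a)) * (w * (a - a * w * (x * w) * a)) = 0"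
proof -
  define p where "p = w * a * w * x"
  have p_sym: "invol p = p"
    using x by (simp add: is_wgcEP_inv_iff p_def)
  have "p * p = w * a * w * (x * w * (a * w) * x)"
    by (simp add: p_def mult.assoc)
  then have p_idem: "p * p = p"
    by (simp add: is_wgcEP_inv_identities(2)[OF x] p_def)
  have "w * (a * w * (x * w) * a) = p * (w * a)"
    by (simp add: p_def mult.assoc)
  then have "invol (w * (a * w * (x * w) * a)) * (w * (a - a * w * (x * w) * a))
      = invol (w * a) * (p * (w * a) - (p * p) * (w * a))"
    by (simp add: p_sym invol_mult right_diff_distrib mult.assoc)
  then show ?thesis
    by (simp add: p_idem)
qed

lemma wgcEP_nil_part_in_w_qnil:
  assumes x: "is_wgcEP_inv a w x"
  shows "a - a * w * (x * w) * a \<in> w_qnil w"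
proof -
  define b X where "b = a * w" and "X = x * w"
  note ids = is_wgcEP_inv_identities[OF x, folded b_def X_def]
  have yw: "(a - a * w * (x * w) * a) * w = (1 - b * X) * b"
    by (simp add: b_def X_def algebra_simps)
  have "root_null (\<lambda>n. (1 - b * X) * power_residual b X n)"
    using x by (intro root_null_mult_left) (simp add: is_wgcEP_inv_iff b_def X_def)
  moreover have "\<forall>\<^sub>F n in sequentially.
      (1 - b * X) * power_residual b X n = ((1 - b * X) * b) ^ n"
    using eventually_gt_at_top[of 0]
  proof eventually_elim
    case (elim n)
    then obtain m where "n = Suc m"
      using gr0_conv_Suc by blast
    then show ?case
      using power_mult_complement[OF ids(4,3)] by simp
  qed
  ultimately show ?thesis
    by (simp add: w_qnil_iff yw root_null_eventually_cong)
qed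

theorem theorem3p1:
  fixes a w :: "'a::cbanach_star_algebra_1"
  shows "(has_wgcEP_inv a w \<longleftrightarrow>
          (\<exists>z y. a = z + y \<and> invol (w * z) * (w * y) = 0 \<and> y * w * z = 0 \<and>
                 has_wcore_inv z w \<and> y \<in> w_qnil w))
       \<and> ((\<exists>z y. a = z + y \<and> invol (w * z) * (w * y) = 0 \<and> y * w * z = 0 \<and>
                 has_wcore_inv z w \<and> y \<in> w_qnil w) \<longleftrightarrow>
          (\<exists>z y. a = z + y \<and> y * w * z = 0 \<and> has_wcore_inv z w \<and> y \<in> w_qnil w))
       \<and> (\<forall>z y. a = z + y \<and> y * w * z = 0 \<and> has_wcore_inv z w \<and> y \<in> w_qnil w \<longrightarrow>
              wgcEP_inv a w = wcore_inv z w)"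
proof -
  have decomposition:
    "\<exists>z y. a = z + y \<and> invol (w * z) * (w * y) = 0 \<and> y * w * z = 0 \<and>
           has_wcore_inv z w \<and> y \<in> w_qnil w"
    if "is_wgcEP_inv a w x" for x
    using that is_wcore_inv_wgcEP_core_part wgcEP_core_part_orthogonal
      wgcEP_nil_part_mult_core_part wgcEP_nil_part_in_w_qnil
    by (intro exI[of _ "a * w * (x * w) * a"] exI[of _ "a - a * w * (x * w) * a"])
      (auto simp: has_wcore_inv_def)
  have core_inv: "is_wgcEP_inv a w (wcore_inv z w)"
    if "a = z + y" "y * w * z = 0" "has_wcore_inv z w" "y \<in> w_qnil w" for z y
    using that is_wgcEP_inv_add_w_qnil wcore_inv_eqI unfolding has_wcore_inv_def by metis
  show ?thesis
    using decomposition core_inv wgcEP_inv_eqI unfolding has_wgcEP_inv_def by blast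
qed

end
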